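(* Let $p>5$ be a prime with $p\equiv \pm1\pmod 5$. Let $f(x)=x^5-5x^3+5x+2-4t\in\mathbb F_p[t][x]$, write $f(x)^{(p-1)/2}=\sum_r c_r x^r$ with $c_r\in\mathbb F_p[t]$, and let $a(t)=c_{p-1}$, $b(t)=c_{2p-2}$ be the diagonal entries of $N=\begin{pmatrix}c_{p-1}&c_{p-2}\\c_{2p-1}&c_{2p-2}\end{pmatrix}$ (the $p$-th power of the Cartier–Manin matrix of $C^-:y^2=f(x)$ with respect to the basis $dx/y,\ x\,dx/y$, which is diagonal for such $p$). Then, as polynomials in $t$ over $\mathbb F_p$, $$\deg a(t)=\begin{cases}\tfrac32 k,& p=5k+1,\\ \tfrac32 k-1,& p=5k-1,\end{cases}\qquad \deg b(t)=\begin{cases}\tfrac12 k,& p=5k+1,\\ \tfrac12 k-1,& p=5k-1.\end{cases}$$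
   Context: For a hyperelliptic curve $y^2=f(x)$ of genus $g$ over a field of characteristic $p>2$, the Cartier–Manin matrix with respect to the basis $x^{j-1}dx/y$ ($j=1,\dots,g$) of $H^0(C,\Omega^1_C)$ is $N^{(1/p)}$, where $N=(c_{ip-j})_{i,j}$ and $f(x)^{(p-1)/2}=\sum c_r x^r$. *)

theory Defs
  imports "Berlekamp_Zassenhaus.Finite_Field" "HOL-Computational_Algebra.Polynomial"
begin

definition fpoly :: "'p::prime_card mod_ring poly poly" where
  "fpoly = [: [: 2, -4 :], 5, 0, -5, 0, 1 :]"

definition cm_coeff :: "nat \<Rightarrow> 'p::prime_card mod_ring poly" where
  "cm_coeff r = coeff (fpoly ^ ((CARD('p) - 1) div 2)) r"

end

theory Submission
  imports Defs
begin

text \<open>Write f = g(x) - 4t with g = x^5 - 5x^3 + 5x + 2 and n = (p-1)/2. By the binomial theorem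
  the coefficient of t^i in c_r is (n choose i) (-4)^i [x^r] g^(n-i), and the binomial coefficient
  is a unit because n < p. Since deg g^m = 5m, the degree of c_r is n - m for the least m with
  5m \<ge> r, provided [x^r] g^m \<noteq> 0. Reading g^m backwards via the reciprocal polynomial
  1 - 5x^2 + 5x^4 + 2x^5, its coefficients at x^(5m), x^(5m-2), x^(5m-4) are 1, -5m and
  5m + 25 (m choose 2). For p = 10j + 1 the relevant exponents r = 10j, 20j hit the top
  coefficient; for p = 10j - 1 they are 10j - 2 and 20j - 4, where 10j = 1 in F_p turns the
  coefficients into -1.\<close>

lemma map_poly_const_power:
  "map_poly (\<lambda>a::'a::comm_semiring_1. [:a:]) (p ^ n) = map_poly (\<lambda>a. [:a:]) p ^ n"
proof -
  interpret map_poly_comm_semiring_hom "\<lambda>a::'a. [:a:]"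
    by unfold_locales (auto simp: mult.commute)
  show ?thesis by (rule hom_power)
qed

lemma coeff_coeff_power_lift_plus_linear:
  fixes g :: "'a::comm_ring_1 poly"
  shows "coeff (coeff ((map_poly (\<lambda>a. [:a:]) g + [:[:0, c:]:]) ^ n) r) i =
    (if i \<le> n then of_nat (n choose i) * c ^ i * coeff (g ^ (n - i)) r else 0)"
proof -
  let ?G = "map_poly (\<lambda>a. [:a:]) g" and ?T = "[:[:0, c:]:]"
  have summand: "coeff (coeff (of_nat (n choose k) * ?T ^ k * ?G ^ (n - k)) r) i =
      (if k = i then of_nat (n choose k) * c ^ k * coeff (g ^ (n - k)) r else 0)" for k
  proof -
    have "of_nat (n choose k) * ?T ^ k = [:smult (of_nat (n choose k)) (monom (c ^ k) k):]"
      by (simp add: poly_const_pow of_nat_poly monom_altdef flip: smult_power)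
    moreover have "coeff (?G ^ (n - k)) r = [:coeff (g ^ (n - k)) r:]"
      by (simp add: coeff_map_poly flip: map_poly_const_power)
    ultimately show ?thesis
      by (simp add: mult_ac)
  qed
  have "(?G + ?T) ^ n = (\<Sum>k\<le>n. of_nat (n choose k) * ?T ^ k * ?G ^ (n - k))"
    by (subst add.commute) (rule binomial_ring)
  then show ?thesis
    by (simp add: coeff_sum summand)
qed

lemma degree_coeff_power_lift_plus_linear:
  fixes g :: "'a::comm_ring_1 poly"
  assumes "J \<le> n" and "of_nat (n choose J) * c ^ J * coeff (g ^ (n - J)) r \<noteq> 0"
    and "degree g * (n - Suc J) < r"
  shows "degree (coeff ((map_poly (\<lambda>a. [:a:]) g + [:[:0, c:]:]) ^ n) r) = J"
proof (rule antisym)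
  show "degree (coeff ((map_poly (\<lambda>a. [:a:]) g + [:[:0, c:]:]) ^ n) r) \<le> J"
  proof (rule degree_le, intro allI impI)
    fix i assume "J < i"
    then have "degree (g ^ (n - i)) < r"
      using degree_power_le[of g "n - i"] assms(3)
      by (meson diff_le_mono2 le_less_trans less_eq_Suc_le mult_le_mono2 order.trans)
    then show "coeff (coeff ((map_poly (\<lambda>a. [:a:]) g + [:[:0, c:]:]) ^ n) r) i = 0"
      by (simp add: coeff_coeff_power_lift_plus_linear coeff_eq_0)
  qed
  show "J \<le> degree (coeff ((map_poly (\<lambda>a. [:a:]) g + [:[:0, c:]:]) ^ n) r)"
    using assms(1,2) by (intro le_degree) (simp add: coeff_coeff_power_lift_plus_linear)
qed

lemma low_coeffs_power:
  fixes h :: "'a::comm_ring_1 poly"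
  assumes "coeff h 0 = 1" and "coeff h 1 = 0" and "coeff h 3 = 0"
  shows "coeff (h ^ m) 0 = 1 \<and> coeff (h ^ m) 1 = 0 \<and> coeff (h ^ m) 2 = of_nat m * coeff h 2
    \<and> coeff (h ^ m) 3 = 0
    \<and> coeff (h ^ m) 4 = of_nat m * coeff h 4 + of_nat (m choose 2) * coeff h 2 ^ 2"
proof (induction m)
  case 0
  then show ?case by (simp add: numeral_2_eq_2)
next
  case (Suc m)
  have "Suc m choose 2 = (m choose 2) + m"
    by (simp add: numeral_2_eq_2)
  with Suc assms show ?case
    by (simp add: coeff_mult eval_nat_numeral algebra_simps power2_eq_square)
qed

lemma of_nat_binomial_mod_ring_nonzero:
  assumes "n < CARD('p::prime_card)" and "k \<le> n"
  shows "(of_nat (n choose k) :: 'p mod_ring) \<noteq> 0"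
proof
  assume "(of_nat (n choose k) :: 'p mod_ring) = 0"
  then have "CARD('p) dvd fact n"
    using binomial_fact_lemma[OF assms(2)] of_nat_0_mod_ring_dvd by (metis dvd_mult)
  then show False
    using assms(1) prime_dvd_fact_iff prime_card by (metis not_le)
qed

definition g_poly :: "'a::comm_ring_1 poly" where
  "g_poly = [:2, 5, 0, -5, 0, 1:]"

lemma fpoly_eq_lift_plus_linear: "fpoly = map_poly (\<lambda>a. [:a:]) g_poly + [:[:0, -4:]:]"
  by (simp add: fpoly_def g_poly_def map_poly_pCons numeral_poly)

lemma degree_cm_coeff:
  assumes "CARD('p::prime_card) > 5" and "m \<le> (CARD('p) - 1) div 2" and "5 * (m - 1) < r"
    and "coeff (g_poly ^ m :: 'p mod_ring poly) r \<noteq> 0"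
  shows "degree (cm_coeff r :: 'p mod_ring poly) = (CARD('p) - 1) div 2 - m"
proof -
  let ?n = "(CARD('p) - 1) div 2"
  have "(of_nat 4 :: 'p mod_ring) \<noteq> 0"
    using assms(1) of_nat_0_mod_ring_dvd[where 'a='p, of 4] dvd_imp_le[of "CARD('p)" 4] by auto
  then have "(-4 :: 'p mod_ring) ^ (?n - m) \<noteq> 0"
    by simp
  moreover have "(of_nat (?n choose (?n - m)) :: 'p mod_ring) \<noteq> 0"
    using assms(1) by (intro of_nat_binomial_mod_ring_nonzero) auto
  moreover have "degree (g_poly :: 'p mod_ring poly) = 5"
    by (simp add: g_poly_def)
  ultimately show ?thesis
    using assms(2-4) unfolding cm_coeff_def fpoly_eq_lift_plus_linear
    by (intro degree_coeff_power_lift_plus_linear) (auto simp: Suc_diff_Suc)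
qed

lemma coeff_g_poly_power_from_top:
  assumes "i \<le> 5 * m"
  shows "coeff (g_poly ^ m :: 'a::idom poly) (5 * m - i) = coeff (reflect_poly g_poly ^ m) i"
proof -
  have "degree (g_poly ^ m :: 'a poly) = 5 * m"
    by (simp add: degree_power_eq g_poly_def)
  with assms show ?thesis
    by (simp add: coeff_reflect_poly flip: reflect_poly_power)
qed

lemma coeffs_reflect_g_poly:
  "coeff (reflect_poly g_poly :: 'a::idom poly) 0 = 1"
  "coeff (reflect_poly g_poly :: 'a poly) 1 = 0"
  "coeff (reflect_poly g_poly :: 'a poly) 2 = -5"
  "coeff (reflect_poly g_poly :: 'a poly) 3 = 0"
  "coeff (reflect_poly g_poly :: 'a poly) 4 = 5"
  by (simp_all add: coeff_reflect_poly g_poly_def)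

lemma coeff_g_poly_power_top: "coeff (g_poly ^ m :: 'a::idom poly) (5 * m) = 1"
  using coeff_g_poly_power_from_top[where 'a='a, of 0 m]
    low_coeffs_power[OF coeffs_reflect_g_poly(1,2,4)[where 'a='a], of m] by simp

lemma coeffs_g_poly_power_below_top:
  assumes "m \<ge> 1"
  shows "coeff (g_poly ^ m :: 'a::idom poly) (5 * m - 2) = - 5 * of_nat m"
    and "coeff (g_poly ^ m :: 'a poly) (5 * m - 4) = 5 * of_nat m + 25 * of_nat (m choose 2)"
  using coeff_g_poly_power_from_top[where 'a='a, of 2 m] coeff_g_poly_power_from_top[where 'a='a, of 4 m]
    low_coeffs_power[OF coeffs_reflect_g_poly(1,2,4)[where 'a='a], of m]
    coeffs_reflect_g_poly(3,5)[where 'a='a] assms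
  by (simp_all add: mult_ac)

lemma degrees_cm_coeff_if_card_eq_10j_plus_1:
  assumes "CARD('p::prime_card) = 10 * j + 1"
  shows "degree (cm_coeff (CARD('p) - 1) :: 'p mod_ring poly) = 3 * j"
    and "degree (cm_coeff (2 * CARD('p) - 2) :: 'p mod_ring poly) = j"
proof -
  have "j \<ge> 1"
    using assms prime_gt_1_nat[OF prime_card[where 'a='p]] by simp
  with assms have "CARD('p) > 5" and n: "(CARD('p) - 1) div 2 = 5 * j"
    by simp_all
  then show "degree (cm_coeff (CARD('p) - 1) :: 'p mod_ring poly) = 3 * j"
    and "degree (cm_coeff (2 * CARD('p) - 2) :: 'p mod_ring poly) = j"
    using assms degree_cm_coeff[where 'p='p, of "2 * j" "10 * j"]
      degree_cm_coeff[where 'p='p, of "4 * j" "20 * j"]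
      coeff_g_poly_power_top[where 'a="'p mod_ring", of "2 * j"]
      coeff_g_poly_power_top[where 'a="'p mod_ring", of "4 * j"]
    by auto
qed

lemma degrees_cm_coeff_if_card_eq_10j_minus_1:
  assumes "CARD('p::prime_card) + 1 = 10 * j"
  shows "degree (cm_coeff (CARD('p) - 1) :: 'p mod_ring poly) = 3 * j - 1"
    and "degree (cm_coeff (2 * CARD('p) - 2) :: 'p mod_ring poly) = j - 1"
proof -
  have "j \<ge> 1"
    using assms prime_gt_1_nat[OF prime_card[where 'a='p]] by simp
  with assms have "CARD('p) > 5" and n: "(CARD('p) - 1) div 2 = 5 * j - 1"
    and r1: "CARD('p) - 1 = 5 * (2 * j) - 2" and r2: "2 * CARD('p) - 2 = 5 * (4 * j) - 4"
    by linarith+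
  have ten_j: "(of_nat j :: 'p mod_ring) * 10 = 1"
  proof -
    have "(of_nat (CARD('p) + 1) :: 'p mod_ring) = 1"
      by simp
    then show ?thesis
      unfolding assms by (simp add: mult.commute)
  qed
  have "coeff (g_poly ^ (2 * j) :: 'p mod_ring poly) (5 * (2 * j) - 2) = - (of_nat j * 10)"
    using coeffs_g_poly_power_below_top(1)[where 'a="'p mod_ring", of "2 * j"] \<open>j \<ge> 1\<close>
    by (simp add: mult_ac)
  then have v1: "coeff (g_poly ^ (2 * j) :: 'p mod_ring poly) (CARD('p) - 1) = -1"
    unfolding r1 ten_j by simp
  have "4 * j choose 2 = 2 * j * (4 * j - 1)"
    by (simp add: choose_two)
  then have choose: "(of_nat (4 * j choose 2) :: 'p mod_ring) = 2 * of_nat j * (4 * of_nat j - 1)"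
    using \<open>j \<ge> 1\<close> by (simp add: of_nat_diff)
  have "coeff (g_poly ^ (4 * j) :: 'p mod_ring poly) (5 * (4 * j) - 4)
      = 5 * of_nat (4 * j) + 25 * of_nat (4 * j choose 2)"
    using coeffs_g_poly_power_below_top(2)[where 'a="'p mod_ring", of "4 * j"] \<open>j \<ge> 1\<close> by simp
  also have "\<dots> = 2 * (of_nat j * 10) ^ 2 - 3 * (of_nat j * 10)"
    unfolding choose by (simp add: algebra_simps power2_eq_square)
  finally have "coeff (g_poly ^ (4 * j) :: 'p mod_ring poly) (5 * (4 * j) - 4) = \<dots>" .
  then have v2: "coeff (g_poly ^ (4 * j) :: 'p mod_ring poly) (2 * CARD('p) - 2) = -1"
    unfolding r2 ten_j by simp
  show "degree (cm_coeff (CARD('p) - 1) :: 'p mod_ring poly) = 3 * j - 1"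
    using degree_cm_coeff[OF \<open>CARD('p) > 5\<close>, of "2 * j" "CARD('p) - 1"] v1 n r1 \<open>j \<ge> 1\<close>
    by simp
  show "degree (cm_coeff (2 * CARD('p) - 2) :: 'p mod_ring poly) = j - 1"
    using degree_cm_coeff[OF \<open>CARD('p) > 5\<close>, of "4 * j" "2 * CARD('p) - 2"] v2 n r2 \<open>j \<ge> 1\<close>
    by simp
qed

theorem lemma4p5:
  assumes "CARD('p::prime_card) > 5"
    and "CARD('p) mod 5 = 1 \<or> CARD('p) mod 5 = 4"
  shows "(\<forall>k. CARD('p) = 5 * k + 1 \<longrightarrow>
            degree (cm_coeff (CARD('p) - 1) :: 'p mod_ring poly) = 3 * k div 2
          \<and> degree (cm_coeff (2 * CARD('p) - 2) :: 'p mod_ring poly) = k div 2)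
       \<and> (\<forall>k. CARD('p) = 5 * k - 1 \<longrightarrow>
            degree (cm_coeff (CARD('p) - 1) :: 'p mod_ring poly) = 3 * k div 2 - 1
          \<and> degree (cm_coeff (2 * CARD('p) - 2) :: 'p mod_ring poly) = k div 2 - 1)"
proof -
  have odd: "odd (CARD('p))"
    using prime_odd_nat[OF prime_card[where 'a='p]] assms(1) by simp
  show ?thesis
  proof (rule conjI; intro allI impI)
    fix k assume p: "CARD('p) = 5 * k + 1"
    with odd have "even k" by presburger
    then obtain j where "k = 2 * j" ..
    with p show "degree (cm_coeff (CARD('p) - 1) :: 'p mod_ring poly) = 3 * k div 2
        \<and> degree (cm_coeff (2 * CARD('p) - 2) :: 'p mod_ring poly) = k div 2"
      using degrees_cm_coeff_if_card_eq_10j_plus_1[where 'p='p, of j] by simp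
  next
    fix k assume p: "CARD('p) = 5 * k - 1"
    with odd assms(1) have "even k" by presburger
    then obtain j where "k = 2 * j" ..
    with p assms(1) show "degree (cm_coeff (CARD('p) - 1) :: 'p mod_ring poly) = 3 * k div 2 - 1
        \<and> degree (cm_coeff (2 * CARD('p) - 2) :: 'p mod_ring poly) = k div 2 - 1"
      using degrees_cm_coeff_if_card_eq_10j_minus_1[where 'p='p, of j] by simp
  qed
qed

end
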